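(* Let $N\in\mathbb{N}$. Consider parameters $(D,b_1,\dots,b_N,r_1,\dots,r_N)$ with $D>0$, $b_i>0$ for $1\le i\le N$, and $0<r_1<r_2<\cdots<r_N$ (no relation between $D$ and $h:=\sum_{i=1}^N b_i/r_i$ is assumed; $D>h$, $D=h$ and $D<h$ are all allowed). For $k\in\mathbb{N}$ define the polynomial $$P_N^k(\lambda)=\Big(D+\frac{\lambda^2}{(2k-1)^2}\Big)\prod_{j=1}^N(\lambda+r_j)-\sum_{i=1}^N b_i\prod_{\substack{1\le j\le N\\ j\neq i}}(\lambda+r_j),$$ a polynomial of degree $N+2$ in $\lambda$, and call the multiset of its $N+2$ complex roots (counted with multiplicity) the cluster of eigenvalues associated with $k$. Let $k_1,k_2\in\mathbb{N}$ with $k_1<k_2$. Then the parameters $D, b_1,\dots,b_N, r_1,\dots,r_N$ are uniquely determined by (and can be recovered from) the two clusters of eigenvalues associated with $k=k_1$ and $k=k_2$; that is, if two admissible parameter tuples yield the same clusters for $k_1$ and for $k_2$, then the tuples coincide.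
   Context: This arises from the extended Burgers model $\partial_t^2u=D\,\partial_x^2u-\sum_{i=1}^N b_i\int_0^t e^{-r_i(t-\tau)}\partial_x^2u(\tau,x)\,d\tau$ on $(0,\pi/2)$ with $u(t,0)=0$, $\partial_xu(t,\pi/2)=0$; replacing $\partial_x^2$ by its eigenvalue $-(2k-1)^2$ (eigenfunction $\sin(2k-1)x$) in the first-order augmented system for $(u,\partial_tu,w_1,\dots,w_N)$ gives an $(N+2)\times(N+2)$ matrix whose eigenvalues ("clustered eigenvalues") are exactly the roots of $P_N^k$ as defined in the claim. *)

theory Defs
  imports Complex_Main "HOL-Computational_Algebra.Computational_Algebra"
begin

definition admissible :: "nat \<Rightarrow> real \<Rightarrow> (nat \<Rightarrow> real) \<Rightarrow> (nat \<Rightarrow> real) \<Rightarrow> bool" where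
  "admissible N D b r \<longleftrightarrow> D > 0 \<and> (\<forall>i\<in>{1..N}. b i > 0) \<and> (\<forall>i\<in>{1..N}. r i > 0) \<and>
     (\<forall>i\<in>{1..N}. \<forall>j\<in>{1..N}. i < j \<longrightarrow> r i < r j)"

definition PNk :: "nat \<Rightarrow> real \<Rightarrow> (nat \<Rightarrow> real) \<Rightarrow> (nat \<Rightarrow> real) \<Rightarrow> nat \<Rightarrow> complex poly" where
  "PNk N D b r k =
     [:complex_of_real D, 0, 1 / (of_nat (2*k - 1))^2:] * (\<Prod>j\<in>{1..N}. [:complex_of_real (r j), 1:])
     - (\<Sum>i\<in>{1..N}. smult (complex_of_real (b i)) (\<Prod>j\<in>{1..N} - {i}. [:complex_of_real (r j), 1:]))"

definition cluster :: "nat \<Rightarrow> real \<Rightarrow> (nat \<Rightarrow> real) \<Rightarrow> (nat \<Rightarrow> real) \<Rightarrow> nat \<Rightarrow> complex multiset" where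
  "cluster N D b r k = proots (PNk N D b r k)"

end

theory Submission
  imports Defs
begin

text \<open>
  Since the leading coefficient \<open>c\<^sub>k = 1/(2k-1)^2\<close> of \<open>P_N^k\<close> is known, a cluster determines the
  polynomial itself. Writing \<open>P_N^k = (D + c\<^sub>k \<lambda>\<^sup>2) Q - R\<close> with \<open>Q = \<Prod>\<^sub>j (\<lambda> + r\<^sub>j)\<close> monic of
  degree \<open>N\<close> and \<open>deg R < N\<close>, two distinct levels \<open>c\<^sub>k\<^sub>1 \<noteq> c\<^sub>k\<^sub>2\<close> separate \<open>\<lambda>\<^sup>2 Q\<close> from
  \<open>D Q - R\<close>. Hence \<open>Q\<close> is determined, so are the increasing roots \<open>-r\<^sub>j\<close>; the coefficient
  of \<open>\<lambda>\<^sup>N\<close> in \<open>D Q - R\<close> gives \<open>D\<close>, and \<open>R(-r\<^sub>i) = b\<^sub>i \<Prod>\<^sub>j\<^sub>\<noteq>\<^sub>i (r\<^sub>j - r\<^sub>i)\<close> gives \<open>b\<^sub>i\<close>.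
\<close>

lemma strict_mono_on_eq_if_image_eq:
  fixes f g :: "'a::linorder \<Rightarrow> 'b::linorder"
  assumes "finite A" and "strict_mono_on A f" and "strict_mono_on A g"
    and "f ` A = g ` A" and "x \<in> A"
  shows "f x = g x"
proof -
  define xs where "xs = sorted_list_of_set A"
  have xs: "sorted_wrt (<) xs" "set xs = A"
    using assms(1) by (simp_all add: xs_def)
  have "sorted_wrt (<) (map f xs)" and "sorted_wrt (<) (map g xs)"
    using assms(2,3) xs by (auto intro: sorted_wrt_map_mono simp: strict_mono_on_def)
  moreover have "set (map g xs) = set (map f xs)"
    using assms(4) xs(2) by simp
  ultimately have "map g xs = map f xs"
    by (rule strict_sorted_equal)
  then show ?thesis
    using assms(5) xs(2) by simp
qed

lemma one_over_of_nat_square_eq_iff: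
  "(1 / (of_nat m)^2 :: 'a::field_char_0) = 1 / (of_nat n)^2 \<longleftrightarrow> m = n"
  by (simp only: inverse_eq_divide[symmetric] inverse_eq_iff_eq of_nat_power[symmetric] of_nat_eq_iff)
    (simp add: power_eq_iff_eq_base)

lemma complex_poly_eqI_proots:
  fixes p q :: "complex poly"
  assumes "lead_coeff p = lead_coeff q" and "proots p = proots q"
  shows "p = q"
  by (metis assms complex_poly_decompose_multiset)

lemma lead_coeff_quadratic_mult_diff:
  fixes Q R :: "'a::idom poly"
  assumes "c \<noteq> 0" and "lead_coeff Q = 1" and "degree R < degree Q + 2"
  shows "lead_coeff ([:d, 0, c:] * Q - R) = c"
proof -
  have "Q \<noteq> 0"
    using assms(2) by auto
  then have deg: "degree ([:d, 0, c:] * Q) = degree Q + 2"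
    using assms(1) by (subst degree_mult_eq) auto
  have "lead_coeff ([:d, 0, c:] * Q - R) = lead_coeff (- R + [:d, 0, c:] * Q)"
    by (simp only: diff_conv_add_uminus add.commute)
  also have "\<dots> = lead_coeff ([:d, 0, c:] * Q)"
    by (rule lead_coeff_add_le) (use deg assms(3) in \<open>simp only: degree_minus\<close>)
  also have "\<dots> = c"
    using assms(1,2) by (simp only: lead_coeff_mult) simp
  finally show ?thesis .
qed

lemma quadratic_mult_diff_cancel:
  fixes Q Q' R R' :: "'a::idom poly"
  assumes "c1 \<noteq> c2"
    and "[:d, 0, c1:] * Q - R = [:d', 0, c1:] * Q' - R'"
    and "[:d, 0, c2:] * Q - R = [:d', 0, c2:] * Q' - R'"
  shows "Q = Q'" and "smult d Q - R = smult d' Q - R'"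
proof -
  have "smult (c1 - c2) ([:0, 0, 1:] * Q) = smult (c1 - c2) ([:0, 0, 1:] * Q')"
    using arg_cong2[OF assms(2,3), of "(-)"]
    by (simp add: smult_diff_left algebra_simps)
  then show "Q = Q'"
    using assms(1) smult_cancel[of "c1 - c2" Q Q'] by simp
  then show "smult d Q - R = smult d' Q - R'"
    using assms(2) by simp
qed

lemma smult_diff_cancel:
  fixes Q R R' :: "'a::idom poly"
  assumes "coeff Q n \<noteq> 0" and "coeff R n = 0" and "coeff R' n = 0"
    and "smult d Q - R = smult d' Q - R'"
  shows "d = d'" and "R = R'"
proof -
  have "d * coeff Q n = d' * coeff Q n"
    using arg_cong[OF assms(4), of "\<lambda>p. coeff p n"] assms(2,3) by simp
  then show "d = d'"
    using assms(1) by simp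
  then show "R = R'"
    using assms(4) by simp
qed

text \<open>\<open>kernel_numer A b a / kernel_denom A a = \<Sum>\<^sub>i b\<^sub>i / (\<lambda> + a\<^sub>i)\<close> is the Laplace transform
  of the memory kernel \<open>\<Sum>\<^sub>i b\<^sub>i exp (-a\<^sub>i t)\<close>.\<close>

definition kernel_denom :: "'i set \<Rightarrow> ('i \<Rightarrow> 'a::comm_ring_1) \<Rightarrow> 'a poly" where
  "kernel_denom A a = (\<Prod>j\<in>A. [:a j, 1:])"

definition kernel_numer :: "'i set \<Rightarrow> ('i \<Rightarrow> 'a::comm_ring_1) \<Rightarrow> ('i \<Rightarrow> 'a) \<Rightarrow> 'a poly" where
  "kernel_numer A b a = (\<Sum>i\<in>A. smult (b i) (kernel_denom (A - {i}) a))"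

lemma degree_kernel_denom:
  fixes a :: "'i \<Rightarrow> 'a::idom"
  assumes "finite A"
  shows "degree (kernel_denom A a) = card A"
  unfolding kernel_denom_def using assms by (subst degree_prod_eq_sum_degree) auto

lemma lead_coeff_kernel_denom:
  fixes a :: "'i \<Rightarrow> 'a::idom"
  shows "lead_coeff (kernel_denom A a) = 1"
  unfolding kernel_denom_def by (simp add: lead_coeff_prod)

lemma kernel_denom_roots:
  fixes a :: "'i \<Rightarrow> 'a::idom"
  assumes "finite A"
  shows "{x. poly (kernel_denom A a) x = 0} = (\<lambda>j. - a j) ` A"
proof -
  have "poly (kernel_denom A a) x = 0 \<longleftrightarrow> (\<exists>j\<in>A. x = - a j)" for x
    using assms by (simp add: kernel_denom_def poly_prod add_eq_0_iff)
  then show ?thesis by blast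
qed

lemma degree_kernel_numer:
  fixes a b :: "'i \<Rightarrow> 'a::idom"
  assumes "finite A"
  shows "degree (kernel_numer A b a) \<le> card A - 1"
  unfolding kernel_numer_def
proof (rule degree_sum_le[OF assms])
  fix i assume "i \<in> A"
  then have "degree (kernel_denom (A - {i}) a) = card A - 1"
    using assms by (simp add: degree_kernel_denom)
  then show "degree (smult (b i) (kernel_denom (A - {i}) a)) \<le> card A - 1"
    using degree_smult_le[of "b i" "kernel_denom (A - {i}) a"] by simp
qed

lemma coeff_kernel_numer_card:
  fixes a b :: "'i \<Rightarrow> 'a::idom"
  assumes "finite A"
  shows "coeff (kernel_numer A b a) (card A) = 0"
proof (cases "A = {}")
  case False
  then have "card A > 0"
    using assms by (simp add: card_gt_0_iff)
  then have "degree (kernel_numer A b a) < card A"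
    using degree_kernel_numer[OF assms, of b a] by linarith
  then show ?thesis by (rule coeff_eq_0)
qed (simp add: kernel_numer_def)

lemma poly_kernel_numer_at_root:
  fixes a b :: "'i \<Rightarrow> 'a::comm_ring_1"
  assumes "finite A" and "i \<in> A"
  shows "poly (kernel_numer A b a) (- a i) = b i * (\<Prod>j\<in>A - {i}. a j - a i)"
proof -
  have "poly (kernel_numer A b a) (- a i) = (\<Sum>l\<in>A. b l * (\<Prod>j\<in>A - {l}. a j - a i))"
    by (simp add: kernel_numer_def kernel_denom_def poly_sum poly_prod)
  also have "\<dots> = (\<Sum>l\<in>A. if l = i then b i * (\<Prod>j\<in>A - {i}. a j - a i) else 0)"
  proof (rule sum.cong)
    fix l assume "l \<in> A"
    show "b l * (\<Prod>j\<in>A - {l}. a j - a i) = (if l = i then b i * (\<Prod>j\<in>A - {i}. a j - a i) else 0)"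
    proof (cases "l = i")
      case False
      then have "(\<Prod>j\<in>A - {l}. a j - a i) = (a i - a i) * (\<Prod>j\<in>A - {l} - {i}. a j - a i)"
        using assms by (intro prod.remove) auto
      with False show ?thesis by simp
    qed simp
  qed simp
  also have "\<dots> = b i * (\<Prod>j\<in>A - {i}. a j - a i)"
    using assms by simp
  finally show ?thesis .
qed

lemma kernel_smult_diff_cancel:
  fixes a a' b b' :: "'i \<Rightarrow> 'a::idom"
  assumes "finite A"
    and "smult d (kernel_denom A a) - kernel_numer A b a = smult d' (kernel_denom A a) - kernel_numer A b' a'"
  shows "d = d'" and "kernel_numer A b a = kernel_numer A b' a'"
proof -
  have "coeff (kernel_denom A a) (card A) \<noteq> 0"
    using assms(1) lead_coeff_kernel_denom[of A a] by (simp add: degree_kernel_denom)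
  note cancel = smult_diff_cancel[OF this coeff_kernel_numer_card[OF assms(1)]
      coeff_kernel_numer_card[OF assms(1)] assms(2)]
  show "d = d'" by (rule cancel(1))
  show "kernel_numer A b a = kernel_numer A b' a'" by (rule cancel(2))
qed

lemma kernel_denom_eq_imp_eq:
  fixes a a' :: "'i::linorder \<Rightarrow> real"
  assumes "finite A" and "strict_mono_on A a" and "strict_mono_on A a'"
    and "kernel_denom A (\<lambda>j. of_real (a j) :: 'b::{idom, real_algebra_1}) =
         kernel_denom A (\<lambda>j. of_real (a' j))"
    and "i \<in> A"
  shows "a i = a' i"
proof -
  have "(\<lambda>x. - of_real x :: 'b) ` a ` A = (\<lambda>x. - of_real x) ` a' ` A"
    using kernel_denom_roots[OF assms(1), of "\<lambda>j. of_real (a j) :: 'b"]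
      kernel_denom_roots[OF assms(1), of "\<lambda>j. of_real (a' j) :: 'b"] assms(4)
    by (simp add: image_image)
  moreover have "inj (\<lambda>x. - of_real x :: 'b)"
    by (rule injI) simp
  ultimately have "a ` A = a' ` A"
    by (simp add: inj_image_eq_iff)
  then show ?thesis
    using assms(1-3,5) by (intro strict_mono_on_eq_if_image_eq)
qed

lemma kernel_numer_eq_imp_eq:
  fixes a a' b b' :: "'i \<Rightarrow> 'a::idom"
  assumes "finite A" and "inj_on a A" and "\<forall>j\<in>A. a j = a' j"
    and "kernel_numer A b a = kernel_numer A b' a'" and "i \<in> A"
  shows "b i = b' i"
proof -
  have "b i * (\<Prod>j\<in>A - {i}. a j - a i) = poly (kernel_numer A b a) (- a i)"
    using assms(1,5) by (rule poly_kernel_numer_at_root[symmetric])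
  also have "\<dots> = poly (kernel_numer A b' a') (- a' i)"
    using assms(3-5) by simp
  also have "\<dots> = b' i * (\<Prod>j\<in>A - {i}. a' j - a' i)"
    using assms(1,5) by (rule poly_kernel_numer_at_root)
  also have "\<dots> = b' i * (\<Prod>j\<in>A - {i}. a j - a i)"
    using assms(3,5) by (intro arg_cong[where f = "(*) (b' i)"] prod.cong) auto
  finally have "b i * (\<Prod>j\<in>A - {i}. a j - a i) = b' i * (\<Prod>j\<in>A - {i}. a j - a i)" .
  moreover have "(\<Prod>j\<in>A - {i}. a j - a i) \<noteq> 0"
    using assms(1,2,5) by (auto simp: inj_on_eq_iff)
  ultimately show ?thesis by simp
qed

lemma PNk_eq_kernel:
  "PNk N D b r k =
     [:complex_of_real D, 0, 1 / (of_nat (2*k - 1))^2:] * kernel_denom {1..N} (\<lambda>j. of_real (r j))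
     - kernel_numer {1..N} (\<lambda>i. of_real (b i)) (\<lambda>j. of_real (r j))"
  by (simp add: PNk_def kernel_denom_def kernel_numer_def)

lemma lead_coeff_PNk:
  assumes "1 \<le> k"
  shows "lead_coeff (PNk N D b r k) = 1 / (of_nat (2*k - 1))^2"
  unfolding PNk_eq_kernel
proof (rule lead_coeff_quadratic_mult_diff)
  have "of_nat (2*k - 1) \<noteq> (0::complex)"
    using assms by (simp only: of_nat_eq_0_iff)
  then show "1 / (of_nat (2*k - 1))^2 \<noteq> (0::complex)"
    by (simp del: of_nat_diff)
  show "lead_coeff (kernel_denom {1..N} (\<lambda>j. complex_of_real (r j))) = 1"
    by (rule lead_coeff_kernel_denom)
  show "degree (kernel_numer {1..N} (\<lambda>i. complex_of_real (b i)) (\<lambda>j. of_real (r j)))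
      < degree (kernel_denom {1..N} (\<lambda>j. complex_of_real (r j))) + 2"
    using degree_kernel_numer[of "{1..N}" "\<lambda>i. complex_of_real (b i)" "\<lambda>j. of_real (r j)"]
    by (simp add: degree_kernel_denom)
qed

lemma PNk_eq_if_cluster_eq:
  assumes "1 \<le> k" and "cluster N D b r k = cluster N D' b' r' k"
  shows "PNk N D b r k = PNk N D' b' r' k"
  using assms by (intro complex_poly_eqI_proots) (simp_all add: lead_coeff_PNk cluster_def)

lemma admissible_strict_mono_on:
  "admissible N D b r \<Longrightarrow> strict_mono_on {1..N} r"
  by (simp add: admissible_def strict_mono_on_def)

theorem theorem2p1:
  fixes N k1 k2 :: nat and D D' :: real and b r b' r' :: "nat \<Rightarrow> real"
  assumes "admissible N D b r" and "admissible N D' b' r'"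
    and "1 \<le> k1" and "k1 < k2"
    and "cluster N D b r k1 = cluster N D' b' r' k1"
    and "cluster N D b r k2 = cluster N D' b' r' k2"
  shows "D = D' \<and> (\<forall>i\<in>{1..N}. b i = b' i \<and> r i = r' i)"
proof -
  have "1 \<le> k2"
    using assms(3,4) by linarith
  note PNk_eqs = PNk_eq_if_cluster_eq[OF assms(3,5)] PNk_eq_if_cluster_eq[OF \<open>1 \<le> k2\<close> assms(6)]
  have "1 / (of_nat (2*k1 - 1))^2 \<noteq> (1 / (of_nat (2*k2 - 1))^2 :: complex)"
    using assms(3,4) by (subst one_over_of_nat_square_eq_iff) linarith
  note separated = quadratic_mult_diff_cancel[OF this PNk_eqs[unfolded PNk_eq_kernel]]
  note mono = assms(1,2)[THEN admissible_strict_mono_on]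
  have r: "\<forall>i\<in>{1..N}. r i = r' i"
    using kernel_denom_eq_imp_eq[OF finite_atLeastAtMost mono separated(1)] by blast
  note D_R = kernel_smult_diff_cancel[OF finite_atLeastAtMost separated(2)]
  have "inj_on (complex_of_real \<circ> r) {1..N}"
    using strict_mono_on_imp_inj_on[OF mono(1)] inj_on_subset[OF inj_of_real subset_UNIV]
    by (rule comp_inj_on)
  then have "complex_of_real (b i) = of_real (b' i)" if "i \<in> {1..N}" for i
    using kernel_numer_eq_imp_eq[OF finite_atLeastAtMost _ _ D_R(2) that] r by (simp add: comp_def)
  with D_R(1) r show ?thesis
    by simp
qed

end
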